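(* Let $\Omega$ be any set of $q$ elements, where $q$ is a power of two and $q \ge 8$. Then there exists a nice pair of permutations for $\Omega$.
   Context: For a permutation $\sigma$ of a $q$-element set $\Omega$ and $0 \le i < q$, $\sigma(i)$ denotes the element in position $i$. Given two permutations $\sigma_1,\sigma_2$ of $\Omega$, form the $2\times q$ array whose first row is $\sigma_1(0),\ldots,\sigma_1(q-1)$ and whose second row is $\sigma_2(0),\ldots,\sigma_2(q-1)$. Each $a\in\Omega$ occurs once in each row. If $a=\sigma_1(i)$, its first-row neighbors are $l_1=\sigma_1(i-1 \bmod q)$, $r_1=\sigma_1(i+1 \bmod q)$ and the down-neighbor $d=\sigma_2(i)$. If $a=\sigma_2(j)$, its second-row neighbors are $l_2=\sigma_2(j-1\bmod q)$, $r_2=\sigma_2(j+1 \bmod q)$ and the up-neighbor $u=\sigma_1(j)$. The pair $(\sigma_1,\sigma_2)$ is called a nice pair if for every $a\in\Omega$ the six elements $l_1,r_1,d,l_2,r_2,u$ are pairwise distinct. *)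

theory Defs
  imports Main
begin

text \<open>A permutation of a finite set \<Omega> is represented as a list listing each element
  of \<Omega> exactly once; position i holds the element \<sigma>(i).\<close>

definition is_perm_of :: "'a list \<Rightarrow> 'a set \<Rightarrow> bool" where
  "is_perm_of s \<Omega> \<longleftrightarrow> distinct s \<and> set s = \<Omega>"

definition nice_pair :: "'a set \<Rightarrow> 'a list \<Rightarrow> 'a list \<Rightarrow> bool" where
  "nice_pair \<Omega> s1 s2 \<longleftrightarrow>
     is_perm_of s1 \<Omega> \<and> is_perm_of s2 \<Omega> \<and>
     (let q = card \<Omega> in
      \<forall>i<q. \<forall>j<q. s1 ! i = s2 ! j \<longrightarrow>
        distinct [s1 ! ((i + q - 1) mod q), s1 ! ((i + 1) mod q), s2 ! i,
                  s2 ! ((j + q - 1) mod q), s2 ! ((j + 1) mod q), s1 ! j])"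

end

theory Submission
  imports Defs "HOL-Number_Theory.Cong"
begin

(* Enumerate \<Omega> once as a list xs and take \<sigma>\<^sub>1 = xs.  For \<sigma>\<^sub>2 choose
   \<sigma>\<^sub>2(i) = \<sigma>\<^sub>1(f i) with the affine index map f(x) = 5x + 2 mod q.  Then the
   nice-pair condition for (\<sigma>\<^sub>1, \<sigma>\<^sub>2) becomes a purely arithmetic condition on
   f, the notion nice_index_perm defined below. *)

text \<open>Index-level version of a nice pair: the pair (identity, f) of permutations of
  {..<q}.\<close>

definition nice_index_perm :: "nat \<Rightarrow> (nat \<Rightarrow> nat) \<Rightarrow> bool" where
  "nice_index_perm q f \<longleftrightarrow> bij_betw f {..<q} {..<q} \<and>
     (\<forall>j<q. distinct [(f j + q - 1) mod q, (f j + 1) mod q, f (f j),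
                       f ((j + q - 1) mod q), f ((j + 1) mod q), j])"

lemma is_perm_of_reindex:
  assumes xs: "is_perm_of xs \<Omega>" and len: "length xs = q"
    and bij: "bij_betw f {..<q} {..<q}"
  shows "is_perm_of (map (\<lambda>i. xs ! f i) [0..<q]) \<Omega>"
proof -
  have xs_inj: "inj_on ((!) xs) {..<q}"
    using xs len unfolding is_perm_of_def by (intro inj_on_nth) auto
  have "distinct (map (\<lambda>i. xs ! f i) [0..<q])"
    unfolding distinct_map
    using comp_inj_on[OF bij_betw_imp_inj_on[OF bij]] xs_inj bij_betw_imp_surj_on[OF bij]
    by (simp add: comp_def atLeast0LessThan)
  moreover have "set (map (\<lambda>i. xs ! f i) [0..<q]) = (!) xs ` (f ` {..<q})"
    by (auto simp: atLeast_upt)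
  moreover have "(!) xs ` {..<q} = \<Omega>"
    using xs len by (auto simp: is_perm_of_def in_set_conv_nth)
  ultimately show ?thesis
    using bij_betw_imp_surj_on[OF bij] by (simp add: is_perm_of_def)
qed

text \<open>Transfer: relabelling {..<q} by an enumeration xs of \<Omega> turns a nice index
  permutation f into the nice pair (xs, xs \<circ> f).\<close>

lemma nice_pair_from_index_perm:
  assumes fin: "finite \<Omega>" and card: "card \<Omega> = q" and nice: "nice_index_perm q f"
  shows "\<exists>s1 s2. nice_pair \<Omega> s1 s2"
proof -
  have bij: "bij_betw f {..<q} {..<q}"
    and six: "\<And>j. j < q \<Longrightarrow> distinct [(f j + q - 1) mod q, (f j + 1) mod q, f (f j),
                       f ((j + q - 1) mod q), f ((j + 1) mod q), j]"
    using nice unfolding nice_index_perm_def by blast+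
  have f_lt: "f i < q" if "i < q" for i
    using bij that by (auto dest: bij_betwE)
  obtain xs where xs: "is_perm_of xs \<Omega>"
    using finite_distinct_list[OF fin] unfolding is_perm_of_def by blast
  have len: "length xs = q"
    using distinct_card xs card unfolding is_perm_of_def by metis
  have xs_inj: "inj_on ((!) xs) {..<q}"
    using xs len unfolding is_perm_of_def by (intro inj_on_nth) auto
  define s2 where "s2 = map (\<lambda>i. xs ! f i) [0..<q]"
  have s2_nth: "s2 ! i = xs ! f i" if "i < q" for i
    using that by (simp add: s2_def)
  have "distinct [xs ! ((i + q - 1) mod q), xs ! ((i + 1) mod q), s2 ! i,
                 s2 ! ((j + q - 1) mod q), s2 ! ((j + 1) mod q), xs ! j]"
    if ij: "i < q" "j < q" "xs ! i = s2 ! j" for i j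
  proof -
    have "xs ! i = xs ! f j" using ij s2_nth by simp
    hence i_eq: "i = f j" using xs_inj ij f_lt by (auto dest: inj_onD)
    have q0: "0 < q" using ij by simp
    let ?idx = "[(f j + q - 1) mod q, (f j + 1) mod q, f (f j),
                 f ((j + q - 1) mod q), f ((j + 1) mod q), j]"
    have "[xs ! ((i + q - 1) mod q), xs ! ((i + 1) mod q), s2 ! i,
           s2 ! ((j + q - 1) mod q), s2 ! ((j + 1) mod q), xs ! j] = map ((!) xs) ?idx"
      using ij q0 f_lt by (simp add: i_eq s2_nth)
    moreover have "inj_on ((!) xs) (set ?idx)"
      using xs_inj by (rule inj_on_subset) (use ij q0 f_lt in auto)
    ultimately show ?thesis
      using six[OF ij(2)] by (simp only: distinct_map)
  qed
  then have "nice_pair \<Omega> xs s2"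
    using xs is_perm_of_reindex[OF xs len bij] card
    unfolding nice_pair_def s2_def Let_def by simp
  thus ?thesis by blast
qed

lemma affine_mod_bij:
  fixes a b q :: nat
  assumes "coprime a q"
  shows "bij_betw (\<lambda>x. (a * x + b) mod q) {..<q} {..<q}"
proof -
  have "inj_on (\<lambda>x. (a * x + b) mod q) {..<q}"
  proof (rule inj_onI)
    fix x y assume "x \<in> {..<q}" "y \<in> {..<q}" "(a * x + b) mod q = (a * y + b) mod q"
    then show "x = y"
      using assms
      by (auto simp: cong_def[symmetric] cong_add_rcancel_nat cong_mult_lcancel_nat
               intro: cong_less_modulus_unique_nat)
  qed
  moreover have "(\<lambda>x. (a * x + b) mod q) ` {..<q} \<subseteq> {..<q}"
    by auto
  ultimately show ?thesis
    by (simp add: bij_betw_def endo_inj_surj)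
qed

lemma pred_mod_mod_divisor:
  fixes d q x :: nat
  assumes "d dvd q" "0 < q"
  shows "((x + q - 1) mod q) mod d = (x + (d - 1)) mod d"
proof -
  obtain m where m: "q = d * Suc m"
    using assms by (metis dvdE gr0_implies_Suc mult_0_right neq0_conv)
  then have "0 < d" using assms(2) by auto
  with m have "x + q - 1 = (x + (d - 1)) + d * m" by (simp add: algebra_simps)
  then show ?thesis
    using assms(1) by (simp add: mod_mod_cancel)
qed

lemma affine_mod_reduce:
  fixes a x c n :: nat
  shows "(a * (x mod n) + c) mod n = (a * x + c) mod n"
  by (metis mod_add_left_eq mod_mult_right_eq)

text \<open>The finite check: the residues modulo 8 of the six neighbour indices of the
  map 5x + 2, expressed through j, are pairwise distinct.  They depend only on
  j mod 8, so it suffices to inspect the eight residues.\<close>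

lemma affine_5_2_residues_distinct:
  fixes j :: nat
  shows "distinct [(5*j + 9) mod 8, (5*j + 3) mod 8, (25*j + 12) mod 8,
                   (5*j + 37) mod 8, (5*j + 7) mod 8, j mod 8]"
proof -
  have reduce: "(a * j + c) mod 8 = (a * (j mod 8) + c) mod 8" for a c :: nat
    by (rule affine_mod_reduce[symmetric])
  have "\<forall>r\<in>{..<8::nat}. distinct [(5*r + 9) mod 8, (5*r + 3) mod 8, (25*r + 12) mod 8,
                   (5*r + 37) mod 8, (5*r + 7) mod 8, r]"
    by (simp add: lessThan_nat_numeral)
  then show ?thesis
    by (subst (1 2 3 4 5) reduce) simp
qed

lemma affine_5_2_neighbours_mod8:
  fixes q j :: nat
  assumes q8: "8 dvd q" and q0: "0 < q"
  defines "f \<equiv> \<lambda>x. (5 * x + 2) mod q"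
  shows "map (\<lambda>x. x mod 8) [(f j + q - 1) mod q, (f j + 1) mod q, f (f j),
                             f ((j + q - 1) mod q), f ((j + 1) mod q), j]
       = [(5*j + 9) mod 8, (5*j + 3) mod 8, (25*j + 12) mod 8,
          (5*j + 37) mod 8, (5*j + 7) mod 8, j mod 8]"
proof -
  have f_mod8: "f x mod 8 = (5 * x + 2) mod 8" for x
    using q8 by (simp add: f_def mod_mod_cancel)
  have "((f j + q - 1) mod q) mod 8 = (5*j + 9) mod 8"
    using pred_mod_mod_divisor[OF q8 q0, of "f j"] mod_add_left_eq[of "f j" 8 7]
    by (simp add: f_mod8 mod_simps ac_simps)
  moreover have "((f j + 1) mod q) mod 8 = (5*j + 3) mod 8"
    using q8 mod_add_left_eq[of "f j" 8 1] by (simp add: mod_mod_cancel f_mod8 mod_simps ac_simps)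
  moreover have "f (f j) mod 8 = (25*j + 12) mod 8"
  proof -
    have "f (f j) mod 8 = (5 * (f j mod 8) + 2) mod 8"
      by (simp only: f_mod8[of "f j"] affine_mod_reduce)
    also have "\<dots> = (5 * (5 * j + 2) + 2) mod 8"
      by (simp only: f_mod8 affine_mod_reduce)
    finally show ?thesis by (simp add: add.commute)
  qed
  moreover have "f ((j + q - 1) mod q) mod 8 = (5*j + 37) mod 8"
  proof -
    have "f ((j + q - 1) mod q) mod 8 = (5 * (((j + q - 1) mod q) mod 8) + 2) mod 8"
      by (simp only: f_mod8 affine_mod_reduce)
    also have "\<dots> = (5 * (j + 7) + 2) mod 8"
      by (simp only: pred_mod_mod_divisor[OF q8 q0] affine_mod_reduce) simp
    finally show ?thesis by (simp add: add.commute)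
  qed
  moreover have "f ((j + 1) mod q) mod 8 = (5*j + 7) mod 8"
  proof -
    have "f ((j + 1) mod q) mod 8 = (5 * (((j + 1) mod q) mod 8) + 2) mod 8"
      by (simp only: f_mod8 affine_mod_reduce)
    also have "\<dots> = (5 * (j + 1) + 2) mod 8"
      by (simp only: mod_mod_cancel[OF q8] affine_mod_reduce)
    finally show ?thesis by (simp add: add.commute)
  qed
  ultimately show ?thesis by simp
qed

lemma affine_5_2_neighbours_distinct:
  fixes q j :: nat
  assumes q8: "8 dvd q" and jq: "j < q"
  defines "f \<equiv> \<lambda>x. (5 * x + 2) mod q"
  shows "distinct [(f j + q - 1) mod q, (f j + 1) mod q, f (f j),
                   f ((j + q - 1) mod q), f ((j + 1) mod q), j]"
proof -
  have "distinct (map (\<lambda>x. x mod 8) [(f j + q - 1) mod q, (f j + 1) mod q, f (f j),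
                                      f ((j + q - 1) mod q), f ((j + 1) mod q), j])"
    using affine_5_2_neighbours_mod8[OF q8, of j] affine_5_2_residues_distinct[of j] jq
    unfolding f_def by simp
  then show ?thesis unfolding distinct_map by blast
qed

lemma affine_5_2_nice_index_perm:
  fixes q :: nat
  assumes "8 dvd q" and "coprime 5 q"
  shows "nice_index_perm q (\<lambda>x. (5 * x + 2) mod q)"
  unfolding nice_index_perm_def
  using affine_mod_bij[OF assms(2)] affine_5_2_neighbours_distinct[OF assms(1)] by blast

lemma power_of_two_ge_8:
  fixes q :: nat
  assumes "\<exists>k. q = 2 ^ k" and "q \<ge> 8"
  shows "8 dvd q" and "coprime 5 q"
proof -
  obtain k where qk: "q = 2 ^ k" using assms(1) by blast
  have "\<not> k < 3"
  proof
    assume "k < 3"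
    then have "q < 2 ^ 3" unfolding qk by (rule power_strict_increasing) simp
    with assms(2) show False by simp
  qed
  then have "(2::nat) ^ 3 dvd 2 ^ k" using le_imp_power_dvd[of 3 k 2] by simp
  then show "8 dvd q" by (simp add: qk)
  show "coprime 5 q" by (simp add: qk)
qed

theorem lemma2:
  fixes \<Omega> :: "'a set" and q :: nat
  assumes "finite \<Omega>" and "card \<Omega> = q" and "\<exists>k. q = 2 ^ k" and "q \<ge> 8"
  shows "\<exists>s1 s2. nice_pair \<Omega> s1 s2"
proof -
  have "8 dvd q" and "coprime 5 q"
    using power_of_two_ge_8[OF assms(3,4)] by auto
  then have "nice_index_perm q (\<lambda>x. (5 * x + 2) mod q)"
    by (rule affine_5_2_nice_index_perm)
  then show ?thesis
    using nice_pair_from_index_perm assms(1,2) by blast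
qed

end
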